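(* Let $h>0$ and let $f:C([-h,0],\mathbb{R}_+)\to\mathbb{R}_+$ be a continuous functional which maps closed bounded sets into bounded subsets of $\mathbb{R}_+$. Consider $x'(t)=-x(t)+f(x_t)$, $x\ge0$, and assume that every nonnegative solution admits a unique extension to the whole right semi-axis. Suppose $f(0)=0$ and $f(K)=K$ for some $K>0$ (here $0$ and $K$ denote constant functions), and that the constant solution $x\equiv K$ attracts every solution with nonnegative, not identically zero initial function. Then there exists a positive solution $\psi:\mathbb{R}\to(0,\infty)$ of this equation defined for all $t\in\mathbb{R}$ such that $\psi(-\infty)=0$ and $\psi(+\infty)=K$.
   Context: $C([-h,0],\mathbb{R}_+)$ carries the sup norm $|\phi|=\max_{s\in[-h,0]}|\phi(s)|$, and $x_t\in C([-h,0],\mathbb{R}_+)$ is defined by $x_t(s)=x(t+s)$. *)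

theory Defs
  imports "HOL-Analysis.Analysis"
begin

text \<open>Elements of C([-h,0],R_+) are represented canonically as functions real => real
  that are continuous and nonnegative on [-h,0] and vanish outside [-h,0].\<close>
definition Cplus :: "real \<Rightarrow> (real \<Rightarrow> real) set" where
  "Cplus h = {\<phi>. continuous_on {-h..0} \<phi> \<and> (\<forall>s\<in>{-h..0}. 0 \<le> \<phi> s)
                 \<and> (\<forall>s. s \<notin> {-h..0} \<longrightarrow> \<phi> s = 0)}"

definition seg :: "real \<Rightarrow> (real \<Rightarrow> real) \<Rightarrow> real \<Rightarrow> (real \<Rightarrow> real)" where
  "seg h x t = (\<lambda>s. if s \<in> {-h..0} then x (t + s) else 0)"

definition supn :: "real \<Rightarrow> (real \<Rightarrow> real) \<Rightarrow> real" where
  "supn h \<phi> = (SUP s\<in>{-h..0}. \<bar>\<phi> s\<bar>)"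

definition fcont :: "real \<Rightarrow> ((real \<Rightarrow> real) \<Rightarrow> real) \<Rightarrow> bool" where
  "fcont h f \<longleftrightarrow> (\<forall>\<phi>\<in>Cplus h. \<forall>e>0. \<exists>d>0. \<forall>\<psi>\<in>Cplus h.
      supn h (\<lambda>s. \<psi> s - \<phi> s) < d \<longrightarrow> \<bar>f \<psi> - f \<phi>\<bar> < e)"

definition C_closed :: "real \<Rightarrow> (real \<Rightarrow> real) set \<Rightarrow> bool" where
  "C_closed h B \<longleftrightarrow> (\<forall>\<phi> \<in> Cplus h. \<forall>u :: nat \<Rightarrow> (real \<Rightarrow> real).
      (\<forall>n. u n \<in> B) \<and> (\<lambda>n. supn h (\<lambda>s. u n s - \<phi> s)) \<longlonglongrightarrow> 0 \<longrightarrow> \<phi> \<in> B)"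

definition C_bounded :: "real \<Rightarrow> (real \<Rightarrow> real) set \<Rightarrow> bool" where
  "C_bounded h B \<longleftrightarrow> (\<exists>M. \<forall>\<phi>\<in>B. supn h \<phi> \<le> M)"

definition maps_cb_to_bounded :: "real \<Rightarrow> ((real \<Rightarrow> real) \<Rightarrow> real) \<Rightarrow> bool" where
  "maps_cb_to_bounded h f \<longleftrightarrow> (\<forall>B. B \<subseteq> Cplus h \<and> C_closed h B \<and> C_bounded h B
      \<longrightarrow> bounded (f ` B))"

text \<open>Nonnegative solution on [-h,T] (initial time 0; equation is autonomous).\<close>
definition sol_on :: "real \<Rightarrow> ((real \<Rightarrow> real) \<Rightarrow> real) \<Rightarrow> real \<Rightarrow> (real \<Rightarrow> real) \<Rightarrow> bool" where
  "sol_on h f T x \<longleftrightarrow> continuous_on {-h..T} x \<and> (\<forall>s\<in>{-h..T}. 0 \<le> x s)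
      \<and> (\<forall>t\<in>{0<..<T}. (x has_real_derivative (- x t + f (seg h x t))) (at t))"

definition gsol :: "real \<Rightarrow> ((real \<Rightarrow> real) \<Rightarrow> real) \<Rightarrow> (real \<Rightarrow> real) \<Rightarrow> bool" where
  "gsol h f x \<longleftrightarrow> continuous_on {-h..} x \<and> (\<forall>s\<in>{-h..}. 0 \<le> x s)
      \<and> (\<forall>t\<in>{0<..}. (x has_real_derivative (- x t + f (seg h x t))) (at t))"

end

theory Submission
  imports Defs "HOL-Complex_Analysis.Great_Picard"
begin

text \<open>
  Solutions starting from the small constant histories \<open>\<epsilon>\<^sub>n \<rightarrow> 0\<close> are attracted to \<open>K\<close>,
  so each crosses \<open>\<delta> = K/2\<close> at a first time \<open>\<tau>\<^sub>n\<close>.  Recentred at that crossing they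
  form a family with values in \<open>[0, \<delta>]\<close> which the equation makes uniformly Lipschitz; by
  Arzela-Ascoli, and since \<open>f\<close> is continuous and bounded on bounded sets, a subsequence
  converges locally uniformly to a solution \<open>w\<close> on \<open>(-\<infinity>, 0)\<close> with \<open>w 0 = \<delta>\<close>.
  Uniqueness of the zero solution forces \<open>\<tau>\<^sub>n \<rightarrow> \<infinity>\<close> and \<open>w > 0\<close>; \<open>w\<close> tends to \<open>0\<close>
  at \<open>-\<infinity>\<close>, and continuing \<open>w\<close> forward gives a positive solution converging to \<open>K\<close>.
\<close>

section \<open>Segments and the sup norm\<close>

lemma supn_le:
  assumes "0 \<le> h" "\<And>s. s \<in> {-h..0} \<Longrightarrow> \<bar>\<phi> s\<bar> \<le> c"
  shows "supn h \<phi> \<le> c"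
  unfolding supn_def using assms by (intro cSUP_least) auto

lemma abs_le_supn:
  assumes "continuous_on {-h..0} \<phi>" "s \<in> {-h..0}"
  shows "\<bar>\<phi> s\<bar> \<le> supn h \<phi>"
proof -
  have "compact ((\<lambda>s. \<bar>\<phi> s\<bar>) ` {-h..0})"
    using assms(1) by (intro compact_continuous_image continuous_on_rabs) auto
  then have "bdd_above ((\<lambda>s. \<bar>\<phi> s\<bar>) ` {-h..0})"
    by (intro bounded_imp_bdd_above compact_imp_bounded)
  then show ?thesis unfolding supn_def by (rule cSUP_upper[OF assms(2)])
qed

lemma seg_in_Cplus:
  assumes "continuous_on {t-h..t} x" "\<And>s. s \<in> {t-h..t} \<Longrightarrow> 0 \<le> x s"
  shows "seg h x t \<in> Cplus h"
proof -
  have "continuous_on {-h..0} (\<lambda>s. x (t + s))"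
    by (rule continuous_on_compose2[OF assms(1)]) (auto intro!: continuous_intros)
  then have "continuous_on {-h..0} (seg h x t)"
    by (rule continuous_on_eq) (simp add: seg_def)
  then show ?thesis using assms(2) by (auto simp: Cplus_def seg_def)
qed

lemma seg_in_Cplus_if_lipschitz:
  "L-lipschitz_on UNIV x \<Longrightarrow> (\<And>u. 0 \<le> x u) \<Longrightarrow> seg h x t \<in> Cplus h"
  by (rule seg_in_Cplus) (auto intro: lipschitz_on_continuous_on lipschitz_on_subset)

lemma supn_seg_diff_le:
  assumes "0 \<le> h" "\<And>u. u \<in> {t-h..t} \<Longrightarrow> \<bar>x u - y u\<bar> \<le> c"
  shows "supn h (\<lambda>s. seg h x t s - seg h y t s) \<le> c"
proof (rule supn_le[OF assms(1)])
  fix s assume "s \<in> {-h..0}"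
  then show "\<bar>seg h x t s - seg h y t s\<bar> \<le> c"
    using assms(2)[of "t + s"] by (simp add: seg_def)
qed

lemma seg_cong: "(\<And>u. u \<in> {t-h..t} \<Longrightarrow> x u = y u) \<Longrightarrow> seg h x t = seg h y t"
  by (auto simp: seg_def)

lemma seg_shift: "seg h (\<lambda>u. x (u + c)) t = seg h x (t + c)"
  by (rule ext) (simp add: seg_def algebra_simps)

section \<open>Solutions on open sets\<close>

definition solves_on :: "real \<Rightarrow> ((real \<Rightarrow> real) \<Rightarrow> real) \<Rightarrow> real set \<Rightarrow> (real \<Rightarrow> real) \<Rightarrow> bool" where
  "solves_on h f S x \<longleftrightarrow> (\<forall>t\<in>S. (x has_real_derivative (- x t + f (seg h x t))) (at t))"

lemma gsol_iff:
  "gsol h f x \<longleftrightarrow> continuous_on {-h..} x \<and> (\<forall>s\<in>{-h..}. 0 \<le> x s) \<and> solves_on h f {0<..} x"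
  by (simp add: gsol_def solves_on_def)

lemma sol_on_iff:
  "sol_on h f T x \<longleftrightarrow> continuous_on {-h..T} x \<and> (\<forall>s\<in>{-h..T}. 0 \<le> x s) \<and> solves_on h f {0<..<T} x"
  by (simp add: sol_on_def solves_on_def)

lemma solves_on_subset: "solves_on h f S x \<Longrightarrow> T \<subseteq> S \<Longrightarrow> solves_on h f T x"
  by (auto simp: solves_on_def)

lemma solves_on_shift:
  assumes "solves_on h f S x" "\<And>t. t \<in> T \<Longrightarrow> t + c \<in> S"
  shows "solves_on h f T (\<lambda>u. x (u + c))"
  unfolding solves_on_def seg_shift
proof
  fix t assume "t \<in> T"
  then have "(x has_real_derivative (- x (t + c) + f (seg h x (t + c)))) (at (t + c))"
    using assms unfolding solves_on_def by blast
  then show "((\<lambda>u. x (u + c)) has_real_derivative (- x (t + c) + f (seg h x (t + c)))) (at t)"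
    by (simp only: DERIV_shift)
qed

lemma solves_on_cong:
  assumes "solves_on h f S x" "open U" "\<And>u. u \<in> U \<Longrightarrow> y u = x u"
    and hist: "\<And>t. t \<in> S \<Longrightarrow> {t-h..t} \<subseteq> U" "0 \<le> h"
  shows "solves_on h f S y"
  unfolding solves_on_def
proof
  fix t assume t: "t \<in> S"
  have "t \<in> {t-h..t}" using hist(2) by simp
  then have tU: "t \<in> U" using hist(1)[OF t] by blast
  have "seg h y t = seg h x t"
    using assms(3) hist(1)[OF t] by (intro seg_cong) auto
  moreover have "(x has_real_derivative (- x t + f (seg h x t))) (at t)"
    using assms(1) t unfolding solves_on_def by blast
  then have "(y has_real_derivative (- x t + f (seg h x t))) (at t)"
    by (rule has_field_derivative_transform_within_open[OF _ assms(2) tU]) (simp add: assms(3))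
  ultimately show "(y has_real_derivative (- y t + f (seg h y t))) (at t)"
    using assms(3)[OF tU] by simp
qed

lemma solves_near_eventually:
  assumes "\<And>n. solves_on h f {- \<tau> n<..<0} (z n)" "\<forall>\<^sub>F n in F. c < \<tau> n" "t \<in> {-c<..<0}"
  shows "\<exists>e>0. \<forall>\<^sub>F n in F. solves_on h f {t-e<..<t+e} (z n)"
proof (intro exI conjI)
  define e where "e = min (t + c) (- t)"
  show "e > 0" using assms(3) by (simp add: e_def)
  show "\<forall>\<^sub>F n in F. solves_on h f {t-e<..<t+e} (z n)"
    using assms(2)
  proof (rule eventually_mono)
    fix n assume "c < \<tau> n"
    then have "{t-e<..<t+e} \<subseteq> {- \<tau> n<..<0}" by (auto simp: e_def)
    then show "solves_on h f {t-e<..<t+e} (z n)" by (rule solves_on_subset[OF assms(1)])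
  qed
qed

lemma pos_propagates_if_deriv_ge_neg:
  fixes g g' :: "real \<Rightarrow> real"
  assumes "a \<le> b" "continuous_on {a..b} g"
    and "\<And>t. t \<in> {a<..<b} \<Longrightarrow> (g has_real_derivative g' t) (at t)"
    and "\<And>t. t \<in> {a<..<b} \<Longrightarrow> - g t \<le> g' t" "g a > 0"
  shows "g b > 0"
proof -
  have "exp a * g a \<le> exp b * g b"
  proof (rule DERIV_nonneg_imp_increasing_open[OF assms(1)])
    fix t assume "a < t" "t < b"
    then have "((\<lambda>t. exp t * g t) has_real_derivative exp t * (g t + g' t)) (at t)"
      by (auto intro!: derivative_eq_intros assms(3) simp: algebra_simps)
    moreover have "0 \<le> exp t * (g t + g' t)"
      using assms(4)[of t] \<open>a < t\<close> \<open>t < b\<close> by (intro mult_nonneg_nonneg) auto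
    ultimately show "\<exists>y. ((\<lambda>t. exp t * g t) has_real_derivative y) (at t) \<and> 0 \<le> y" by blast
  qed (intro continuous_intros assms(2))
  moreover have "0 < exp a * g a" using assms(5) by simp
  ultimately have "0 < exp b * g b" by linarith
  then show ?thesis by (simp add: zero_less_mult_iff)
qed

lemma first_crossing_time:
  fixes g :: "real \<Rightarrow> real"
  assumes "continuous_on {0..} g" "g 0 < d" "t1 \<ge> 0" "d \<le> g t1"
  obtains \<tau> where "\<tau> > 0" "g \<tau> = d" "\<And>t. t \<in> {0..<\<tau>} \<Longrightarrow> g t < d"
proof -
  define S where "S = {0..} \<inter> g -` {d..}"
  have "closed S" unfolding S_def by (rule continuous_closed_preimage[OF assms(1)]) auto
  moreover have "S \<noteq> {}" "bdd_below S" using assms(3,4) by (auto simp: S_def intro: bdd_belowI[of _ 0])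
  ultimately have "Inf S \<in> S" by (intro closed_contains_Inf)
  then have ge: "Inf S \<ge> 0" "g (Inf S) \<ge> d" by (auto simp: S_def)
  have below: "g t < d" if "0 \<le> t" "t < Inf S" for t
    using cInf_lower[of t S] \<open>bdd_below S\<close> that by (force simp: S_def)
  have pos: "Inf S > 0" using ge assms(2) by (cases "Inf S = 0") auto
  have "continuous_on {0..Inf S} g" by (rule continuous_on_subset[OF assms(1)]) auto
  then have "closed ({0..Inf S} \<inter> g -` {..d})" by (intro continuous_closed_preimage) auto
  moreover have "{0..<Inf S} \<subseteq> {0..Inf S} \<inter> g -` {..d}"
    using below by (fastforce intro: less_imp_le)
  ultimately have "closure {0..<Inf S} \<subseteq> {0..Inf S} \<inter> g -` {..d}" by (rule closure_minimal[rotated])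
  then have "g (Inf S) \<le> d" using pos by (auto simp: subset_iff)
  then show ?thesis by (intro that[of "Inf S"] pos below) (use ge in auto)
qed

lemma lipschitz_on_if_deriv_bounded:
  fixes g :: "real \<Rightarrow> real"
  assumes "a < b" "continuous_on {a..b} g"
    and "\<And>t. t \<in> {a<..<b} \<Longrightarrow> (g has_real_derivative D t) (at t)"
    and "\<And>t. t \<in> {a<..<b} \<Longrightarrow> \<bar>D t\<bar> \<le> L"
  shows "L-lipschitz_on {a..b} g"
proof -
  have "0 \<le> L" using assms(1) assms(4)[of "(a + b) / 2"] by simp
  have "L-lipschitz_on {a<..<b} g"
  proof (rule lipschitz_onI[OF _ \<open>0 \<le> L\<close>])
    fix x y assume "x \<in> {a<..<b}" "y \<in> {a<..<b}"
    have "norm (g x - g y) \<le> L * norm (x - y)"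
    proof (rule field_differentiable_bound)
      show "(g has_field_derivative D t) (at t within {a<..<b})" if "t \<in> {a<..<b}" for t
        using assms(3)[OF that] at_within_open[OF that] by simp
    qed (use assms(4) \<open>x \<in> {a<..<b}\<close> \<open>y \<in> {a<..<b}\<close> in auto)
    then show "dist (g x) (g y) \<le> L * dist x y" by (simp add: dist_norm)
  qed
  moreover have "continuous_on (closure {a<..<b}) g" using assms(1,2) by simp
  ultimately have "L-lipschitz_on (closure {a<..<b}) g" by (rule lipschitz_on_closure)
  then show ?thesis by (simp only: closure_greaterThanLessThan[OF assms(1)])
qed

lemma has_real_derivative_if_has_integral:
  fixes w G :: "real \<Rightarrow> real"
  assumes "continuous_on {a..b} G"
    and "\<And>s u. a < s \<Longrightarrow> s \<le> u \<Longrightarrow> u < b \<Longrightarrow> (G has_integral (w u - w s)) {s..u}"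
    and "t \<in> {a<..<b}"
  shows "(w has_real_derivative G t) (at t)"
proof -
  obtain s u where su: "a < s" "s < t" "t < u" "u < b"
    using assms(3) by (metis dense greaterThanLessThan_iff)
  have "continuous_on {s..u} G" by (rule continuous_on_subset[OF assms(1)]) (use su in auto)
  then have "((\<lambda>x. integral {s..x} G) has_real_derivative G t) (at t within {s..u})"
    using su by (intro integral_has_real_derivative) auto
  then have "((\<lambda>x. w s + integral {s..x} G) has_real_derivative G t) (at t)"
    using su at_within_Icc_at[of s t u] by (auto intro!: derivative_eq_intros)
  then show ?thesis
  proof (rule has_field_derivative_transform_within_open)
    show "w s + integral {s..x} G = w x" if "x \<in> {s<..<u}" for x
      using integral_unique[OF assms(2)[of s x]] that su by simp
  qed (use su in auto)
qed

lemma has_real_derivative_of_limit: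
  fixes g G :: "nat \<Rightarrow> real \<Rightarrow> real"
  assumes "\<And>n. continuous_on {a..b} (g n)"
    and "\<And>n t. t \<in> {a<..<b} \<Longrightarrow> (g n has_real_derivative G n t) (at t)"
    and "\<And>n t. \<bar>G n t\<bar> \<le> B"
    and "\<And>t. t \<in> {a..b} \<Longrightarrow> (\<lambda>n. G n t) \<longlonglongrightarrow> H t" "\<And>t. t \<in> {a..b} \<Longrightarrow> (\<lambda>n. g n t) \<longlonglongrightarrow> w t"
    and "continuous_on {a..b} H" "t \<in> {a<..<b}"
  shows "(w has_real_derivative H t) (at t)"
proof (rule has_real_derivative_if_has_integral[OF assms(6) _ assms(7)])
  fix s u assume su: "a < s" "s \<le> u" "u < b"
  show "(H has_integral (w u - w s)) {s..u}"
  proof (rule has_integral_dominated_convergence[where f = G and y = "\<lambda>n. g n u - g n s"])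
    show "(G n has_integral (g n u - g n s)) {s..u}" for n
    proof (rule fundamental_theorem_of_calculus_interior[OF su(2)])
      show "continuous_on {s..u} (g n)" by (rule continuous_on_subset[OF assms(1)]) (use su in auto)
      show "(g n has_vector_derivative G n t) (at t)" if "t \<in> {s<..<u}" for t
        using assms(2)[of t n] that su by (simp add: has_real_derivative_iff_has_vector_derivative)
    qed
    show "(\<lambda>_. B) integrable_on {s..u}" by (rule integrable_const_ivl)
    show "(\<lambda>n. g n u - g n s) \<longlonglongrightarrow> w u - w s" using su by (intro tendsto_diff assms(5)) auto
  qed (use assms(3,4) su in auto)
qed

lemma bounded_subseq_if_not_tendsto_at_top:
  fixes \<tau> :: "nat \<Rightarrow> real"
  assumes "\<not> filterlim \<tau> at_top sequentially" "\<And>n. 0 \<le> \<tau> n"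
  obtains \<sigma> l where "strict_mono \<sigma>" "0 \<le> l" "(\<lambda>n. \<tau> (\<sigma> n)) \<longlonglongrightarrow> l"
proof -
  obtain B where "\<not> (\<forall>\<^sub>F n in sequentially. B \<le> \<tau> n)"
    using assms(1) by (auto simp: filterlim_at_top)
  then have "infinite {n. \<tau> n < B}"
    by (simp add: cofinite_eq_sequentially[symmetric] eventually_cofinite not_le)
  then obtain q :: "nat \<Rightarrow> nat" where q: "strict_mono q" "\<And>n. q n \<in> {n. \<tau> n < B}"
    using infinite_enumerate by blast
  have "(\<tau> \<circ> q) n \<in> {0..B}" for n using q(2)[of n] assms(2)[of "q n"] by simp
  then obtain l q' where l: "l \<in> {0..B}" "strict_mono q'" "(\<tau> \<circ> q \<circ> q') \<longlonglongrightarrow> l"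
    using seq_compactE[OF compact_imp_seq_compact[OF compact_Icc]] by metis
  show ?thesis
  proof (rule that[of "q \<circ> q'" l])
    show "strict_mono (q \<circ> q')" by (rule strict_mono_o[OF q(1) l(2)])
  qed (use l in \<open>auto simp: o_def\<close>)
qed

lemma limit_preserves_range_and_lipschitz:
  fixes z :: "nat \<Rightarrow> real \<Rightarrow> real"
  assumes "\<And>n. range (z n) \<subseteq> {0..M}" "\<And>n. L-lipschitz_on UNIV (z n)"
    and "\<And>t. (\<lambda>n. z n t) \<longlonglongrightarrow> w t"
  shows "range w \<subseteq> {0..M}" "L-lipschitz_on UNIV w"
proof -
  have "0 \<le> z n t" "z n t \<le> M" for n t using assms(1)[of n] by (auto simp: image_subset_iff)
  then show "range w \<subseteq> {0..M}"
    by (auto intro!: LIMSEQ_le_const[OF assms(3)] LIMSEQ_le_const2[OF assms(3)])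
  have "0 \<le> L" using assms(2) lipschitz_on_nonneg by blast
  show "L-lipschitz_on UNIV w"
  proof (rule lipschitz_onI[OF _ \<open>0 \<le> L\<close>])
    fix s t :: real
    have "(\<lambda>n. dist (z n s) (z n t)) \<longlonglongrightarrow> dist (w s) (w t)"
      by (intro tendsto_intros assms(3))
    then show "dist (w s) (w t) \<le> L * dist s t"
      by (rule LIMSEQ_le_const2) (use assms(2) lipschitz_onD in blast)
  qed
qed

lemma equilipschitz_uniformly_convergent_subseq:
  fixes z :: "nat \<Rightarrow> real \<Rightarrow> real"
  assumes "compact S" "\<And>n t. \<bar>z n t\<bar> \<le> M" "\<And>n. L-lipschitz_on UNIV (z n)"
  obtains k g where "strict_mono k" "uniform_limit S (z \<circ> k) g sequentially"
proof -
  have "0 \<le> L" using assms(3) lipschitz_on_nonneg by blast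
  have equicont: "\<exists>d>0. \<forall>n y. y \<in> S \<and> norm (x - y) < d \<longrightarrow> norm (z n x - z n y) < e"
    if "e > 0" for x e
  proof (intro exI[of _ "e / (L + 1)"] conjI allI impI)
    fix n y assume "y \<in> S \<and> norm (x - y) < e / (L + 1)"
    then have "L * \<bar>x - y\<bar> \<le> L * (e / (L + 1))" using \<open>0 \<le> L\<close> by (intro mult_left_mono) auto
    also have "\<dots> < e" using \<open>0 \<le> L\<close> that by (simp add: field_simps)
    finally show "norm (z n x - z n y) < e"
      using lipschitz_onD[OF assms(3), of x y n] by (simp add: dist_real_def)
  qed (use \<open>0 \<le> L\<close> that in simp)
  obtain g k where "strict_mono (k :: nat \<Rightarrow> nat)"
    and "\<And>e. 0 < e \<Longrightarrow> \<exists>N. \<forall>n x. n \<ge> N \<and> x \<in> S \<longrightarrow> norm (z (k n) x - g x) < e"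
    by (rule Arzela_Ascoli[of S z M]) (use assms(1,2) equicont in auto)
  then show ?thesis
    using that[of k g] by (fastforce simp: uniform_limit_sequentially_iff dist_real_def)
qed

lemma equilipschitz_locally_uniform_convergent_subseq:
  fixes z :: "nat \<Rightarrow> real \<Rightarrow> real"
  assumes bnd: "\<And>n t. \<bar>z n t\<bar> \<le> M" and lip: "\<And>n. L-lipschitz_on UNIV (z n)"
  obtains r w where "strict_mono r" "\<And>a b. uniform_limit {a..b} (z \<circ> r) w sequentially"
proof -
  define I where "I i = {-real i..real i}" for i :: nat
  define P where "P i k \<longleftrightarrow> (\<exists>g. uniform_limit (I i) (z \<circ> k) g sequentially)" for i k
  have "\<exists>k. strict_mono k \<and> P i (r \<circ> k)" for i and r :: "nat \<Rightarrow> nat"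
  proof -
    obtain k g where "strict_mono k" "uniform_limit (I i) (z \<circ> r \<circ> k) g sequentially"
      by (rule equilipschitz_uniformly_convergent_subseq[of "I i" "z \<circ> r" M L])
        (use bnd lip in \<open>auto simp: I_def\<close>)
    then show ?thesis by (auto simp: P_def o_assoc)
  qed
  moreover have "P i (r \<circ> k2)"
    if "P i (r \<circ> k1)" "\<And>j. N \<le> j \<Longrightarrow> \<exists>j'. j \<le> j' \<and> k2 j = k1 j'" for i r k1 k2 N
    using that unfolding P_def uniform_limit_sequentially_iff
    by (simp add: o_def) (metis (no_types, opaque_lifting) le_trans linear)
  ultimately obtain k where k: "strict_mono k" "\<And>i. P i (id \<circ> k)"
    by (rule subsequence_diagonalization_lemma[of P id]) blast+
  then obtain G where G: "\<And>i. uniform_limit (I i) (z \<circ> k) (G i) sequentially"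
    unfolding P_def by (metis id_comp)
  define w where "w t = G (nat \<lceil>\<bar>t\<bar>\<rceil>) t" for t
  have in_I: "t \<in> I i" if "\<bar>t\<bar> \<le> real i" for t i using that by (auto simp: I_def)
  have G_eq: "G i t = w t" if "t \<in> I i" for i t
  proof -
    have "t \<in> I (nat \<lceil>\<bar>t\<bar>\<rceil>)" by (rule in_I) linarith
    then show ?thesis unfolding w_def
      using tendsto_uniform_limitI[OF G that] tendsto_uniform_limitI[OF G]
      by (metis LIMSEQ_unique o_def)
  qed
  show ?thesis
  proof (rule that[OF k(1)])
    fix a b :: real
    define i where "i = nat \<lceil>max \<bar>a\<bar> \<bar>b\<bar>\<rceil>"
    have sub: "{a..b} \<subseteq> I i" unfolding i_def by (auto intro!: in_I) linarith+
    show "uniform_limit {a..b} (z \<circ> k) w sequentially"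
      using uniform_limit_on_subset[OF G sub] G_eq sub
      by (simp add: uniform_limit_sequentially_iff subset_iff)
  qed
qed

section \<open>Compactness of bounded families of solutions\<close>

locale delay_equation =
  fixes h :: real and f :: "(real \<Rightarrow> real) \<Rightarrow> real"
  assumes h_pos: "h > 0" and f_cont: "fcont h f" and f_bdd: "maps_cb_to_bounded h f"
begin

lemma f_bounded_on_ball:
  obtains F where "\<And>\<phi>. \<phi> \<in> Cplus h \<Longrightarrow> supn h \<phi> \<le> M \<Longrightarrow> \<bar>f \<phi>\<bar> \<le> F"
proof -
  define B where "B = {\<phi>\<in>Cplus h. supn h \<phi> \<le> M}"
  have "C_closed h B"
    unfolding C_closed_def
  proof (intro ballI allI impI)
    fix \<phi> and u :: "nat \<Rightarrow> real \<Rightarrow> real"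
    assume \<phi>: "\<phi> \<in> Cplus h" and u: "(\<forall>n. u n \<in> B) \<and> (\<lambda>n. supn h (\<lambda>s. u n s - \<phi> s)) \<longlonglongrightarrow> 0"
    have "\<bar>\<phi> s\<bar> \<le> M" if s: "s \<in> {-h..0}" for s
    proof (rule LIMSEQ_le_const)
      show "(\<lambda>n. M + supn h (\<lambda>s. u n s - \<phi> s)) \<longlonglongrightarrow> M"
        using tendsto_add[OF tendsto_const, of _ 0 sequentially M] u by simp
      have "\<bar>\<phi> s\<bar> \<le> M + supn h (\<lambda>s. u n s - \<phi> s)" for n
      proof -
        have "continuous_on {-h..0} (u n)" "continuous_on {-h..0} \<phi>"
          using u \<phi> by (auto simp: B_def Cplus_def)
        then have "\<bar>u n s\<bar> \<le> supn h (u n)" "\<bar>u n s - \<phi> s\<bar> \<le> supn h (\<lambda>s. u n s - \<phi> s)"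
          using s by (auto intro!: abs_le_supn continuous_on_diff)
        moreover have "supn h (u n) \<le> M" using u by (auto simp: B_def)
        ultimately show ?thesis by linarith
      qed
      then show "\<exists>N. \<forall>n\<ge>N. \<bar>\<phi> s\<bar> \<le> M + supn h (\<lambda>s. u n s - \<phi> s)" by blast
    qed
    then show "\<phi> \<in> B" using \<phi> supn_le h_pos by (auto simp: B_def)
  qed
  moreover have "C_bounded h B" "B \<subseteq> Cplus h" by (auto simp: C_bounded_def B_def)
  ultimately have "bounded (f ` B)" using f_bdd by (auto simp: maps_cb_to_bounded_def)
  then obtain F where "\<forall>y\<in>f ` B. norm y \<le> F" unfolding bounded_iff by blast
  then show ?thesis by (intro that[of F]) (auto simp: B_def)
qed

lemma f_tendsto:
  assumes "\<phi> \<in> Cplus h" "\<forall>\<^sub>F x in F. \<psi> x \<in> Cplus h"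
    and "\<And>d. d > 0 \<Longrightarrow> \<forall>\<^sub>F x in F. supn h (\<lambda>s. \<psi> x s - \<phi> s) < d"
  shows "((\<lambda>x. f (\<psi> x)) \<longlongrightarrow> f \<phi>) F"
proof (rule tendstoI)
  fix e :: real assume "e > 0"
  then obtain d where "d > 0" and d: "\<forall>\<psi>\<in>Cplus h. supn h (\<lambda>s. \<psi> s - \<phi> s) < d \<longrightarrow> \<bar>f \<psi> - f \<phi>\<bar> < e"
    using f_cont assms(1) unfolding fcont_def by blast
  show "\<forall>\<^sub>F x in F. dist (f (\<psi> x)) (f \<phi>) < e"
    using assms(2) assms(3)[OF \<open>d > 0\<close>] by eventually_elim (use d in \<open>auto simp: dist_real_def\<close>)
qed

lemma continuous_on_f_seg:
  assumes "L-lipschitz_on UNIV x" "\<And>u. 0 \<le> x u"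
  shows "continuous_on S (\<lambda>t. f (seg h x t))"
proof (intro continuous_at_imp_continuous_on ballI)
  fix t
  have "((\<lambda>u. f (seg h x u)) \<longlongrightarrow> f (seg h x t)) (at t)"
  proof (rule f_tendsto)
    fix d :: real assume "d > 0"
    have "((\<lambda>u. L * \<bar>u - t\<bar>) \<longlongrightarrow> L * \<bar>t - t\<bar>) (at t)" by (intro tendsto_intros)
    then have ev: "\<forall>\<^sub>F u in at t. L * \<bar>u - t\<bar> < d" using \<open>d > 0\<close> by (intro order_tendstoD(2)) auto
    have bound: "supn h (\<lambda>s. seg h x u s - seg h x t s) \<le> L * \<bar>u - t\<bar>" for u
    proof (rule supn_le)
      fix s assume "s \<in> {-h..0}"
      then show "\<bar>seg h x u s - seg h x t s\<bar> \<le> L * \<bar>u - t\<bar>"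
        using lipschitz_onD[OF assms(1), of "u + s" "t + s"] by (simp add: seg_def dist_real_def)
    qed (use h_pos in simp)
    show "\<forall>\<^sub>F u in at t. supn h (\<lambda>s. seg h x u s - seg h x t s) < d"
      using ev by (rule eventually_mono) (use bound in \<open>meson le_less_trans\<close>)
  qed (use seg_in_Cplus_if_lipschitz assms in auto)
  then show "isCont (\<lambda>t. f (seg h x t)) t" by (simp add: isCont_def)
qed

lemma f_seg_bounded:
  obtains F where "\<And>x t. continuous_on {t-h..t} x \<Longrightarrow> (\<And>u. u \<in> {t-h..t} \<Longrightarrow> x u \<in> {0..M})
    \<Longrightarrow> \<bar>f (seg h x t)\<bar> \<le> F"
proof -
  obtain F where F: "\<And>\<phi>. \<phi> \<in> Cplus h \<Longrightarrow> supn h \<phi> \<le> M \<Longrightarrow> \<bar>f \<phi>\<bar> \<le> F"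
    using f_bounded_on_ball[where M = M] by blast
  have "\<bar>f (seg h x t)\<bar> \<le> F"
    if "continuous_on {t-h..t} x" "\<And>u. u \<in> {t-h..t} \<Longrightarrow> x u \<in> {0..M}" for x t
  proof (rule F)
    show "seg h x t \<in> Cplus h" using that by (intro seg_in_Cplus) auto
    show "supn h (seg h x t) \<le> M" using that h_pos by (intro supn_le) (auto simp: seg_def)
  qed
  then show ?thesis by (rule that)
qed

lemma f_seg_tendsto_uniform_limit:
  assumes "uniform_limit {t-h..t} z w sequentially"
    and "\<And>n. seg h (z n) t \<in> Cplus h" "seg h w t \<in> Cplus h"
  shows "(\<lambda>n. f (seg h (z n) t)) \<longlonglongrightarrow> f (seg h w t)"
proof (rule f_tendsto)
  fix d :: real assume "d > 0"
  then have "\<forall>\<^sub>F n in sequentially. \<forall>u\<in>{t-h..t}. dist (z n u) (w u) < d / 2"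
    by (intro uniform_limitD[OF assms(1)]) auto
  then show "\<forall>\<^sub>F n in sequentially. supn h (\<lambda>s. seg h (z n) t s - seg h w t s) < d"
  proof (rule eventually_mono)
    fix n assume "\<forall>u\<in>{t-h..t}. dist (z n u) (w u) < d / 2"
    then have "supn h (\<lambda>s. seg h (z n) t s - seg h w t s) \<le> d / 2"
      using h_pos by (intro supn_seg_diff_le) (auto simp: dist_real_def less_imp_le)
    then show "supn h (\<lambda>s. seg h (z n) t s - seg h w t s) < d" using \<open>d > 0\<close> by linarith
  qed
qed (use assms(2,3) in auto)

lemma solves_on_uniform_limit:
  assumes z: "\<And>n. range (z n) \<subseteq> {0..M}" "\<And>n. L-lipschitz_on UNIV (z n)"
    and w: "range w \<subseteq> {0..M}" "L-lipschitz_on UNIV w"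
    and lim: "uniform_limit {a-h..b} z w sequentially"
    and sol: "\<forall>\<^sub>F n in sequentially. solves_on h f {a<..<b} (z n)"
  shows "solves_on h f {a<..<b} w"
proof -
  define G where "G x t = - x t + f (seg h x t)" for x t
  obtain F where F: "\<And>x t. continuous_on {t-h..t} x \<Longrightarrow> (\<And>u. u \<in> {t-h..t} \<Longrightarrow> x u \<in> {0..M})
      \<Longrightarrow> \<bar>f (seg h x t)\<bar> \<le> F"
    using f_seg_bounded[where M = M] by blast
  have z_bound: "0 \<le> z n u" "z n u \<le> M" for n u using z(1)[of n] by (auto simp: image_subset_iff)
  have w_nonneg: "0 \<le> w u" for u using w(1) by (auto simp: image_subset_iff)
  have z_cont: "continuous_on S (z n)" for n S
    by (rule lipschitz_on_continuous_on, rule lipschitz_on_subset[OF z(2)]) auto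
  have G_bound: "\<bar>G (z n) t\<bar> \<le> M + F" for n t
  proof -
    have "\<bar>f (seg h (z n) t)\<bar> \<le> F" using z_bound by (intro F z_cont) auto
    then show ?thesis using z_bound[of n t] by (simp add: G_def)
  qed
  have z_lim: "(\<lambda>n. z n u) \<longlonglongrightarrow> w u" if "u \<in> {a-h..b}" for u
    by (rule tendsto_uniform_limitI[OF lim that])
  have G_lim: "(\<lambda>n. G (z n) t) \<longlonglongrightarrow> G w t" if "t \<in> {a..b}" for t
  proof -
    have "{t-h..t} \<subseteq> {a-h..b}" using that by auto
    then have "(\<lambda>n. f (seg h (z n) t)) \<longlonglongrightarrow> f (seg h w t)"
      using seg_in_Cplus_if_lipschitz[OF z(2) z_bound(1)] seg_in_Cplus_if_lipschitz[OF w(2) w_nonneg]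
      by (intro f_seg_tendsto_uniform_limit uniform_limit_on_subset[OF lim])
    then show ?thesis unfolding G_def using that h_pos by (intro tendsto_intros z_lim) auto
  qed
  have G_cont: "continuous_on {a..b} (G w)"
    unfolding G_def using w(2) w_nonneg
    by (intro continuous_intros continuous_on_f_seg lipschitz_on_continuous_on[of L]
        lipschitz_on_subset[OF w(2)]) auto
  obtain N where N: "\<And>n. n \<ge> N \<Longrightarrow> solves_on h f {a<..<b} (z n)"
    using sol by (auto simp: eventually_sequentially)
  have "(w has_real_derivative G w t) (at t)" if "t \<in> {a<..<b}" for t
  proof (rule has_real_derivative_of_limit[OF z_cont _ G_bound _ _ G_cont that])
    show "(z (n + N) has_real_derivative G (z (n + N)) t) (at t)" if "t \<in> {a<..<b}" for n t
      using N[of "n + N"] that by (simp add: solves_on_def G_def)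
    show "(\<lambda>n. G (z (n + N)) t) \<longlonglongrightarrow> G w t" if "t \<in> {a..b}" for t
      using LIMSEQ_ignore_initial_segment[OF G_lim[OF that]] .
    show "(\<lambda>n. z (n + N) t) \<longlonglongrightarrow> w t" if "t \<in> {a..b}" for t
      using LIMSEQ_ignore_initial_segment[OF z_lim] that h_pos by simp
  qed
  then show ?thesis by (simp add: solves_on_def G_def)
qed

lemma solution_family_convergent_subseq:
  assumes z: "\<And>n. range (z n) \<subseteq> {0..M}" "\<And>n. L-lipschitz_on UNIV (z n)"
    and sol: "\<And>t. t \<in> S \<Longrightarrow> \<exists>e>0. \<forall>\<^sub>F n in sequentially. solves_on h f {t-e<..<t+e} (z n)"
  obtains r w where "strict_mono r" "\<And>t. (\<lambda>n. z (r n) t) \<longlonglongrightarrow> w t"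
    "range w \<subseteq> {0..M}" "L-lipschitz_on UNIV w" "solves_on h f S w"
proof -
  have "\<bar>z n t\<bar> \<le> M" for n t using z(1)[of n] by (auto simp: image_subset_iff)
  then obtain r w where r: "strict_mono r"
    and lim: "\<And>a b. uniform_limit {a..b} (z \<circ> r) w sequentially"
    using equilipschitz_locally_uniform_convergent_subseq z(2) by metis
  have pt: "(\<lambda>n. z (r n) t) \<longlonglongrightarrow> w t" for t
    using tendsto_uniform_limitI[OF lim[of t t]] by simp
  have w: "range w \<subseteq> {0..M}" "L-lipschitz_on UNIV w"
    using limit_preserves_range_and_lipschitz[of "\<lambda>n. z (r n)", OF z pt] by auto
  have "solves_on h f S w"
    unfolding solves_on_def
  proof
    fix t assume "t \<in> S"
    then obtain e where "e > 0" and ev: "\<forall>\<^sub>F n in sequentially. solves_on h f {t-e<..<t+e} (z n)"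
      using sol by blast
    have "solves_on h f {t-e<..<t+e} w"
      using z w lim eventually_subseq[OF r ev] by (intro solves_on_uniform_limit[of "z \<circ> r"]) auto
    then show "(w has_real_derivative (- w t + f (seg h w t))) (at t)"
      using \<open>e > 0\<close> by (simp add: solves_on_def)
  qed
  then show ?thesis using that r pt w by blast
qed

lemma bounded_solutions_equilipschitz:
  obtains L where "\<And>x a b. a < b \<Longrightarrow> continuous_on {a-h..b} x \<Longrightarrow> x ` {a-h..b} \<subseteq> {0..M}
    \<Longrightarrow> solves_on h f {a<..<b} x \<Longrightarrow> L-lipschitz_on {a..b} x"
proof -
  obtain F where F: "\<And>x t. continuous_on {t-h..t} x \<Longrightarrow> (\<And>u. u \<in> {t-h..t} \<Longrightarrow> x u \<in> {0..M})
      \<Longrightarrow> \<bar>f (seg h x t)\<bar> \<le> F"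
    using f_seg_bounded[where M = M] by blast
  have "(M + \<bar>F\<bar>)-lipschitz_on {a..b} x"
    if "a < b" and cont: "continuous_on {a-h..b} x" and range: "x ` {a-h..b} \<subseteq> {0..M}"
      and sol: "solves_on h f {a<..<b} x" for x a b
  proof (rule lipschitz_on_if_deriv_bounded)
    show "continuous_on {a..b} x" by (rule continuous_on_subset[OF cont]) (use h_pos in auto)
    show "(x has_real_derivative (- x t + f (seg h x t))) (at t)" if "t \<in> {a<..<b}" for t
      using sol that by (simp add: solves_on_def)
    show "\<bar>- x t + f (seg h x t)\<bar> \<le> M + \<bar>F\<bar>" if t: "t \<in> {a<..<b}" for t
    proof -
      have x: "x u \<in> {0..M}" if "u \<in> {t-h..t}" for u
        using that t range by (auto simp: image_subset_iff)
      have "\<bar>f (seg h x t)\<bar> \<le> F"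
        using t x by (intro F continuous_on_subset[OF cont]) auto
      then show ?thesis using x[of t] h_pos by auto
    qed
  qed fact
  then show ?thesis by (rule that)
qed

lemma recentred_solution:
  assumes X: "gsol h f X" "\<And>s. s \<in> {-h..0} \<Longrightarrow> X s = \<epsilon>" "X \<tau> = \<delta>" "0 < \<tau>"
    and range: "X ` {-h..\<tau>} \<subseteq> {0..\<delta>}" and lip: "L-lipschitz_on {0..\<tau>} X"
  defines "z \<equiv> \<lambda>t. X (max 0 (min (t + \<tau>) \<tau>))"
  shows "range z \<subseteq> {0..\<delta>}" "L-lipschitz_on UNIV z" "z 0 = \<delta>" "\<And>t. t \<le> - \<tau> \<Longrightarrow> z t = \<epsilon>"
    "solves_on h f {- \<tau><..<0} z"
proof -
  define clamp where "clamp t = max 0 (min (t + \<tau>) \<tau>)" for t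
  have clamp_in: "clamp t \<in> {0..\<tau>}" for t using X(4) by (auto simp: clamp_def)
  have "X (clamp t) \<in> {0..\<delta>}" for t
    using range clamp_in[of t] h_pos by (auto simp: image_subset_iff)
  then show "range z \<subseteq> {0..\<delta>}" by (auto simp: z_def clamp_def)
  have "1-lipschitz_on UNIV clamp"
    by (rule lipschitz_onI) (auto simp: clamp_def dist_real_def)
  moreover have "clamp ` UNIV \<subseteq> {0..\<tau>}" using clamp_in by auto
  ultimately show "L-lipschitz_on UNIV z"
    using lipschitz_on_compose[of 1 UNIV clamp L X] lipschitz_on_subset[OF lip]
    by (simp add: z_def clamp_def o_def)
  show "z 0 = \<delta>" using X(3,4) by (simp add: z_def)
  show "z t = \<epsilon>" if "t \<le> - \<tau>" for t using that X(2)[of 0] h_pos by (simp add: z_def)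
  show "solves_on h f {- \<tau><..<0} z"
  proof (rule solves_on_cong)
    show "solves_on h f {- \<tau><..<0} (\<lambda>t. X (t + \<tau>))"
      using X(1) by (intro solves_on_shift[where S = "{0<..}"]) (auto simp: gsol_iff)
    show "z u = X (u + \<tau>)" if "u \<in> {- \<tau> - h<..<0}" for u
      using that X(2)[of "u + \<tau>"] X(2)[of 0] h_pos by (cases "u \<le> - \<tau>") (auto simp: z_def)
  qed (use h_pos in auto)
qed

lemma limit_of_past_translates:
  assumes w: "range w \<subseteq> {0..M}" "L-lipschitz_on UNIV w" "solves_on h f {..<0} w"
    and s: "\<And>k. s k \<le> - real k"
  obtains r v where "strict_mono r" "(\<lambda>n. w (s (r n))) \<longlonglongrightarrow> v 0"
    "range v \<subseteq> {0..M}" "L-lipschitz_on UNIV v" "solves_on h f UNIV v"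
proof -
  define \<zeta> where "\<zeta> k t = w (min (t + s k) 0)" for k t
  have \<zeta>_range: "range (\<zeta> k) \<subseteq> {0..M}" for k using w(1) by (auto simp: \<zeta>_def)
  have "1-lipschitz_on UNIV (\<lambda>t. min (t + s k) 0)" for k
    by (rule lipschitz_onI) (auto simp: dist_real_def min_def)
  then have \<zeta>_lip: "L-lipschitz_on UNIV (\<zeta> k)" for k
    using lipschitz_on_compose2[of 1 UNIV "\<lambda>t. min (t + s k) 0" L w] lipschitz_on_subset[OF w(2)]
    by (simp add: \<zeta>_def)
  have \<zeta>_sol: "solves_on h f {..< - s k} (\<zeta> k)" for k
  proof (rule solves_on_cong)
    show "solves_on h f {..< - s k} (\<lambda>t. w (t + s k))" by (rule solves_on_shift[OF w(3)]) auto
    show "\<zeta> k u = w (u + s k)" if "u \<in> {..< - s k}" for u using that by (simp add: \<zeta>_def)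
  qed (use h_pos in auto)
  have "\<exists>e>0. \<forall>\<^sub>F k in sequentially. solves_on h f {t-e<..<t+e} (\<zeta> k)" for t
  proof (intro exI conjI)
    have "\<forall>\<^sub>F k in sequentially. t + 1 < real k" by real_asymp
    then show "\<forall>\<^sub>F k in sequentially. solves_on h f {t-1<..<t+1} (\<zeta> k)"
    proof (rule eventually_mono)
      fix k assume "t + 1 < real k"
      then have "{t-1<..<t+1} \<subseteq> {..< - s k}" using s[of k] by auto
      then show "solves_on h f {t-1<..<t+1} (\<zeta> k)" by (rule solves_on_subset[OF \<zeta>_sol])
    qed
  qed simp
  then obtain r v where r: "strict_mono r" and lim: "\<And>t. (\<lambda>n. \<zeta> (r n) t) \<longlonglongrightarrow> v t"
    and v: "range v \<subseteq> {0..M}" "L-lipschitz_on UNIV v" "solves_on h f UNIV v"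
    by (rule solution_family_convergent_subseq[OF \<zeta>_range \<zeta>_lip]) blast+
  have "\<zeta> k 0 = w (s k)" for k using s[of k] by (simp add: \<zeta>_def)
  then have "(\<lambda>n. w (s (r n))) \<longlonglongrightarrow> v 0" using lim[of 0] by simp
  then show ?thesis using that r v by blast
qed

end

section \<open>Solutions attracted to the positive equilibrium\<close>

locale attracting_equilibrium = delay_equation +
  fixes K :: real
  assumes f_nonneg: "\<forall>\<phi>\<in>Cplus h. 0 \<le> f \<phi>"
    and unique_ext: "\<forall>T\<ge>0. \<forall>x. sol_on h f T x \<longrightarrow>
                (\<exists>y. gsol h f y \<and> (\<forall>s\<in>{-h..T}. y s = x s)) \<and>
                (\<forall>y z. gsol h f y \<and> (\<forall>s\<in>{-h..T}. y s = x s) \<and>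
                       gsol h f z \<and> (\<forall>s\<in>{-h..T}. z s = x s) \<longrightarrow> (\<forall>s\<in>{-h..}. y s = z s))"
    and f_zero: "f (seg h (\<lambda>_. 0) 0) = 0"
    and attracts: "\<forall>x. gsol h f x \<and> (\<exists>s\<in>{-h..0}. x s \<noteq> 0) \<longrightarrow> (x \<longlongrightarrow> K) at_top"
begin

lemma extension_exists:
  "T \<ge> 0 \<Longrightarrow> sol_on h f T x \<Longrightarrow> \<exists>y. gsol h f y \<and> (\<forall>s\<in>{-h..T}. y s = x s)"
  using unique_ext by blast

lemma extension_unique:
  assumes "T \<ge> 0" "sol_on h f T x" "gsol h f y" "gsol h f z"
    and "\<And>s. s \<in> {-h..T} \<Longrightarrow> y s = x s" "\<And>s. s \<in> {-h..T} \<Longrightarrow> z s = x s" "s \<ge> -h"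
  shows "y s = z s"
proof -
  have "\<forall>y z. gsol h f y \<and> (\<forall>s\<in>{-h..T}. y s = x s) \<and> gsol h f z \<and> (\<forall>s\<in>{-h..T}. z s = x s)
      \<longrightarrow> (\<forall>s\<in>{-h..}. y s = z s)"
    using unique_ext assms(1,2) by blast
  then show ?thesis using assms(3-7) by blast
qed

lemma zero_gsol: "gsol h f (\<lambda>_. 0)"
proof -
  have "f (seg h (\<lambda>_. 0) t) = 0" for t using f_zero by (simp add: seg_def)
  then show ?thesis by (simp add: gsol_def)
qed

lemma solution_stays_zero:
  assumes "c \<le> b" "continuous_on {c-h..b} w" "\<And>s. s \<in> {c-h..b} \<Longrightarrow> 0 \<le> w s"
    and "\<And>s. s \<in> {c-h..c} \<Longrightarrow> w s = 0" "solves_on h f {c<..<b} w"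
  shows "w b = 0"
proof -
  define x where "x s = w (s + c)" for s
  have "sol_on h f (b - c) x"
    unfolding sol_on_iff x_def
  proof (intro conjI ballI)
    show "continuous_on {-h..b - c} (\<lambda>s. w (s + c))"
      by (rule continuous_on_compose2[OF assms(2)]) (auto intro!: continuous_intros)
    show "solves_on h f {0<..<b - c} (\<lambda>s. w (s + c))"
      by (rule solves_on_shift[OF assms(5)]) auto
  qed (use assms(3) in auto)
  then obtain y where y: "gsol h f y" "\<And>s. s \<in> {-h..b - c} \<Longrightarrow> y s = x s"
    using extension_exists[OF _ \<open>sol_on h f (b - c) x\<close>] assms(1) by auto
  have x0: "sol_on h f 0 x" "\<And>s. s \<in> {-h..0} \<Longrightarrow> x s = 0"
    using assms(1-4) h_pos
    by (auto simp: sol_on_iff solves_on_def x_def intro!: continuous_on_compose2[OF assms(2)]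
        continuous_intros)
  have "y (b - c) = (\<lambda>_. 0) (b - c)"
  proof (rule extension_unique[OF _ x0(1) y(1) zero_gsol])
    show "y s = x s" if "s \<in> {-h..0}" for s using y(2)[of s] that assms(1) by simp
  qed (use x0(2) assms(1) h_pos in auto)
  then show ?thesis using y(2)[of "b - c"] assms(1) h_pos by (simp add: x_def)
qed

lemma solution_pos_propagates:
  assumes "a \<le> b" "continuous_on {a-h..b} x" "\<And>s. s \<in> {a-h..b} \<Longrightarrow> 0 \<le> x s"
    and "solves_on h f {a<..<b} x" "x a > 0"
  shows "x b > 0"
proof (rule pos_propagates_if_deriv_ge_neg[OF assms(1)])
  show "continuous_on {a..b} x" by (rule continuous_on_subset[OF assms(2)]) (use h_pos in auto)
  show "(x has_real_derivative (- x t + f (seg h x t))) (at t)" if "t \<in> {a<..<b}" for t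
    using assms(4) that by (simp add: solves_on_def)
  show "- x t \<le> - x t + f (seg h x t)" if "t \<in> {a<..<b}" for t
    using that assms(3) f_nonneg by (auto intro!: seg_in_Cplus continuous_on_subset[OF assms(2)])
qed fact

lemma first_passage_solution:
  assumes "0 < \<epsilon>" "\<epsilon> < \<delta>" "\<delta> < K"
  obtains X \<tau> where "gsol h f X" "\<And>s. s \<in> {-h..0} \<Longrightarrow> X s = \<epsilon>"
    "\<tau> > 0" "X \<tau> = \<delta>" "\<And>t. t \<in> {0..<\<tau>} \<Longrightarrow> X t < \<delta>"
proof -
  have "sol_on h f 0 (\<lambda>_. \<epsilon>)" using assms(1) by (simp add: sol_on_def)
  then obtain X where X: "gsol h f X" "\<And>s. s \<in> {-h..0} \<Longrightarrow> X s = \<epsilon>"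
    using extension_exists by fastforce
  have "X 0 = \<epsilon>" using X(2) h_pos by simp
  then have "\<exists>s\<in>{-h..0}. X s \<noteq> 0" using assms(1) h_pos by (intro bexI[of _ 0]) auto
  then have "(X \<longlongrightarrow> K) at_top" using attracts X(1) by blast
  then have "\<forall>\<^sub>F t in at_top. \<delta> < X t" using assms(3) by (rule order_tendstoD)
  then obtain N where "\<And>t. t \<ge> N \<Longrightarrow> \<delta> < X t" by (auto simp: eventually_at_top_linorder)
  then have "max N 0 \<ge> 0" "\<delta> \<le> X (max N 0)" by (auto intro: less_imp_le)
  moreover have "continuous_on {-h..} X" using X(1) by (simp add: gsol_def)
  then have "continuous_on {0..} X" by (rule continuous_on_subset) (use h_pos in auto)
  ultimately obtain \<tau> where "\<tau> > 0" "X \<tau> = \<delta>" "\<And>t. t \<in> {0..<\<tau>} \<Longrightarrow> X t < \<delta>"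
    using first_crossing_time[of X \<delta> "max N 0"] \<open>X 0 = \<epsilon>\<close> assms(2) by blast
  then show ?thesis using that X by blast
qed

lemma first_passage_family:
  assumes "0 < \<delta>" "\<delta> < K"
  obtains z \<tau> \<epsilon> L where "\<And>n. 0 < \<tau> n" "\<And>n. range (z n) \<subseteq> {0..\<delta>}" "\<And>n. L-lipschitz_on UNIV (z n)"
    "\<And>n. z n 0 = \<delta>" "\<And>n t. t \<le> - \<tau> n \<Longrightarrow> z n t = \<epsilon> n" "\<epsilon> \<longlonglongrightarrow> 0"
    "\<And>n. solves_on h f {- \<tau> n<..<0} (z n)"
proof -
  define \<epsilon> where "\<epsilon> n = \<delta> / (2 + real n)" for n
  have \<epsilon>: "0 < \<epsilon> n" "\<epsilon> n < \<delta>" for n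
  proof -
    show "0 < \<epsilon> n" using assms(1) by (simp add: \<epsilon>_def)
    have "\<delta> / (2 + real n) < \<delta> / 1" using assms(1) by (intro divide_strict_left_mono) auto
    then show "\<epsilon> n < \<delta>" by (simp add: \<epsilon>_def)
  qed
  have "\<epsilon> \<longlonglongrightarrow> 0" unfolding \<epsilon>_def by real_asymp
  have "\<forall>n. \<exists>X \<tau>. gsol h f X \<and> (\<forall>s\<in>{-h..0}. X s = \<epsilon> n) \<and> \<tau> > 0 \<and> X \<tau> = \<delta> \<and> (\<forall>t\<in>{0..<\<tau>}. X t < \<delta>)"
    using first_passage_solution[OF \<epsilon> assms(2)] by (metis (no_types))
  then obtain X \<tau> where X: "\<And>n. gsol h f (X n)" "\<And>n s. s \<in> {-h..0} \<Longrightarrow> X n s = \<epsilon> n"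
    and \<tau>: "\<And>n. \<tau> n > 0" "\<And>n. X n (\<tau> n) = \<delta>" "\<And>n t. t \<in> {0..<\<tau> n} \<Longrightarrow> X n t < \<delta>"
    by metis
  have X_range: "X n ` {-h..\<tau> n} \<subseteq> {0..\<delta>}" for n
  proof -
    have "X n t \<le> \<delta>" if "t \<in> {-h..\<tau> n}" for t
      using that X(2)[where n = n and s = t] \<epsilon>[of n] \<tau>(2)[of n] \<tau>(3)[where n = n and t = t]
      by (cases "t < 0"; cases "t = \<tau> n") auto
    then show ?thesis using X(1)[of n] by (auto simp: gsol_def)
  qed
  obtain L where L: "\<And>x a b. a < b \<Longrightarrow> continuous_on {a-h..b} x \<Longrightarrow> x ` {a-h..b} \<subseteq> {0..\<delta>}
      \<Longrightarrow> solves_on h f {a<..<b} x \<Longrightarrow> L-lipschitz_on {a..b} x"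
    using bounded_solutions_equilipschitz[where M = \<delta>] by blast
  have "L-lipschitz_on {0..\<tau> n} (X n)" for n
  proof (rule L)
    have "continuous_on {-h..} (X n)" using X(1) by (simp add: gsol_def)
    then show "continuous_on {0-h..\<tau> n} (X n)" by (rule continuous_on_subset) auto
    have "solves_on h f {0<..} (X n)" using X(1) by (simp add: gsol_iff)
    then show "solves_on h f {0<..<\<tau> n} (X n)" by (rule solves_on_subset) auto
  qed (use X_range \<tau>(1) in auto)
  note z = recentred_solution[OF X(1,2) \<tau>(2,1) X_range this]
  show ?thesis by (rule that[OF \<tau>(1) z(1-4) \<open>\<epsilon> \<longlonglongrightarrow> 0\<close> z(5)])
qed

text \<open>
  If the passage times stayed bounded along a subsequence, a limit of the recentred solutions
  would vanish on a whole history interval and still reach the level \<open>\<delta>\<close>, contradicting the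
  uniqueness of the zero solution.
\<close>

lemma passage_times_unbounded:
  assumes z: "\<And>n. range (z n) \<subseteq> {0..M}" "\<And>n. L-lipschitz_on UNIV (z n)"
    and z0: "\<And>n. z n 0 = \<delta>" "\<delta> > 0"
    and early: "\<And>n t. t \<le> - \<tau> n \<Longrightarrow> z n t = \<epsilon> n" "\<epsilon> \<longlonglongrightarrow> 0"
    and \<tau>: "\<And>n. 0 \<le> \<tau> n" and sol: "\<And>n. solves_on h f {- \<tau> n<..<0} (z n)"
  shows "filterlim \<tau> at_top sequentially"
proof (rule ccontr)
  assume "\<not> filterlim \<tau> at_top sequentially"
  then obtain \<sigma> l where \<sigma>: "strict_mono \<sigma>" "0 \<le> l" "(\<lambda>n. \<tau> (\<sigma> n)) \<longlonglongrightarrow> l"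
    using bounded_subseq_if_not_tendsto_at_top[of \<tau>] \<tau> by blast
  have "\<exists>e>0. \<forall>\<^sub>F n in sequentially. solves_on h f {t-e<..<t+e} (z (\<sigma> n))" if "t \<in> {-l<..<0}" for t
  proof -
    have "- t < l" using that by simp
    then obtain c where "- t < c" "c < l" using dense by blast
    then have "\<forall>\<^sub>F n in sequentially. c < \<tau> (\<sigma> n)" by (intro order_tendstoD(1)[OF \<sigma>(3)])
    then show ?thesis
      using sol that \<open>- t < c\<close> by (intro solves_near_eventually[where \<tau> = "\<tau> \<circ> \<sigma>" and c = c]) auto
  qed
  then obtain r w where r: "strict_mono r" and lim: "\<And>t. (\<lambda>n. z (\<sigma> (r n)) t) \<longlonglongrightarrow> w t"
    and w: "range w \<subseteq> {0..M}" "L-lipschitz_on UNIV w" "solves_on h f {-l<..<0} w"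
    using solution_family_convergent_subseq[of "z \<circ> \<sigma>" M L "{-l<..<0}"] z by auto
  have "w 0 = \<delta>" using lim[of 0] z0(1) LIMSEQ_unique[OF _ tendsto_const] by auto
  have w_early: "w t = 0" if "t < -l" for t
  proof -
    have "(\<lambda>n. \<tau> (\<sigma> (r n))) \<longlonglongrightarrow> l" using LIMSEQ_subseq_LIMSEQ[OF \<sigma>(3) r] by (simp add: o_def)
    then have "\<forall>\<^sub>F n in sequentially. \<tau> (\<sigma> (r n)) < - t" using that by (intro order_tendstoD(2)) auto
    then have ev: "\<forall>\<^sub>F n in sequentially. \<epsilon> (\<sigma> (r n)) = z (\<sigma> (r n)) t"
      by eventually_elim (simp add: early(1))
    have "(\<lambda>n. \<epsilon> (\<sigma> (r n))) \<longlonglongrightarrow> 0"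
      using LIMSEQ_subseq_LIMSEQ[OF early(2) strict_mono_o[OF \<sigma>(1) r]] by (simp add: o_def)
    then have "(\<lambda>n. z (\<sigma> (r n)) t) \<longlonglongrightarrow> 0" using ev by (rule Lim_transform_eventually)
    then show ?thesis using lim[of t] LIMSEQ_unique by blast
  qed
  have cont: "continuous_on UNIV w" using w(2) by (rule lipschitz_on_continuous_on)
  have "closure {..< -l} \<subseteq> {t. w t = 0}"
    using w_early by (intro closure_minimal closed_Collect_eq[OF cont continuous_on_const]) auto
  then have w_zero: "w t = 0" if "t \<le> -l" for t using that by auto
  have "w 0 = 0"
  proof (rule solution_stays_zero[of "-l" 0 w])
    show "continuous_on {- l - h..0} w" using cont by (rule continuous_on_subset) simp
    show "\<And>s. s \<in> {- l - h..0} \<Longrightarrow> 0 \<le> w s" using w(1) by (auto simp: image_subset_iff)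
  qed (use \<sigma>(2) w(3) w_zero in auto)
  then show False using \<open>w 0 = \<delta>\<close> z0(2) by simp
qed

lemma entire_solution_through_level:
  assumes "0 < \<delta>" "\<delta> < K"
  obtains w L where "range w \<subseteq> {0..\<delta>}" "L-lipschitz_on UNIV w" "w 0 = \<delta>"
    "solves_on h f {..<0} w"
proof -
  obtain z \<tau> \<epsilon> L where \<tau>: "\<And>n. 0 < \<tau> n" and z: "\<And>n. range (z n) \<subseteq> {0..\<delta>}"
    "\<And>n. L-lipschitz_on UNIV (z n)" "\<And>n. z n 0 = \<delta>"
    and early: "\<And>n t. t \<le> - \<tau> n \<Longrightarrow> z n t = \<epsilon> n" "\<epsilon> \<longlonglongrightarrow> 0"
    and sol: "\<And>n. solves_on h f {- \<tau> n<..<0} (z n)"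
    using first_passage_family[OF assms] by metis
  have "filterlim \<tau> at_top sequentially"
    using passage_times_unbounded[OF z assms(1) early less_imp_le[OF \<tau>] sol] .
  then have "\<forall>\<^sub>F n in sequentially. 1 - t < \<tau> n" for t by (simp add: filterlim_at_top_dense)
  then have "\<exists>e>0. \<forall>\<^sub>F n in sequentially. solves_on h f {t-e<..<t+e} (z n)" if "t \<in> {..<0}" for t
    using sol that by (intro solves_near_eventually[where \<tau> = \<tau> and c = "1 - t"]) auto
  then obtain r w where "strict_mono r" "\<And>t. (\<lambda>n. z (r n) t) \<longlonglongrightarrow> w t"
    "range w \<subseteq> {0..\<delta>}" "L-lipschitz_on UNIV w" "solves_on h f {..<0} w"
    by (rule solution_family_convergent_subseq[OF z(1,2)]) blast+
  moreover from this(2)[of 0] have "w 0 = \<delta>" using z(3) LIMSEQ_unique[OF _ tendsto_const] by auto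
  ultimately show ?thesis using that by blast
qed

text \<open>
  If \<open>w \<ge> a > 0\<close> at arbitrarily negative times, translating \<open>w\<close> along these times yields in
  the limit an entire solution with values in \<open>[0, \<delta>]\<close> that is at least \<open>a\<close> at time \<open>0\<close>;
  attraction would drive it to \<open>K > \<delta>\<close>.
\<close>

lemma tendsto_zero_at_bot:
  assumes w: "range w \<subseteq> {0..\<delta>}" "L-lipschitz_on UNIV w" "solves_on h f {..<0} w"
    and "\<delta> < K"
  shows "(w \<longlongrightarrow> 0) at_bot"
proof (rule order_tendstoI)
  fix a :: real assume "a < 0"
  then show "\<forall>\<^sub>F t in at_bot. a < w t"
    using w(1) by (auto intro!: always_eventually simp: image_subset_iff intro: less_le_trans)
next
  fix a :: real assume "0 < a"
  show "\<forall>\<^sub>F t in at_bot. w t < a"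
  proof (rule ccontr)
    assume "\<not> (\<forall>\<^sub>F t in at_bot. w t < a)"
    then have "\<forall>N. \<exists>t\<le>N. a \<le> w t" by (simp add: eventually_at_bot_linorder not_less)
    then have "\<forall>k::nat. \<exists>t. t \<le> - real k \<and> a \<le> w t" by blast
    then obtain s where s: "\<And>k::nat. s k \<le> - real k" "\<And>k. a \<le> w (s k)" by metis
    obtain r v where lim: "(\<lambda>n. w (s (r n))) \<longlonglongrightarrow> v 0"
      and v: "range v \<subseteq> {0..\<delta>}" "L-lipschitz_on UNIV v" "solves_on h f UNIV v"
      by (rule limit_of_past_translates[OF w s(1)]) blast+
    have "a \<le> v 0" using s(2) by (intro LIMSEQ_le_const[OF lim]) auto
    have "continuous_on {-h..} v"
      using lipschitz_on_continuous_on[OF v(2)] by (rule continuous_on_subset) simp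
    moreover have "solves_on h f {0<..} v" using v(3) by (rule solves_on_subset) simp
    ultimately have "gsol h f v" using v(1) by (auto simp: gsol_iff image_subset_iff)
    moreover have "\<exists>s\<in>{-h..0}. v s \<noteq> 0"
      using \<open>a \<le> v 0\<close> \<open>0 < a\<close> h_pos by (intro bexI[of _ 0]) auto
    ultimately have "(v \<longlongrightarrow> K) at_top" using attracts by blast
    moreover have "\<forall>\<^sub>F t in at_top. v t \<le> \<delta>" using v(1) by (auto simp: image_subset_iff)
    ultimately have "K \<le> \<delta>" by (rule tendsto_upperbound) simp
    then show False using \<open>\<delta> < K\<close> by simp
  qed
qed

lemma positive_on_past:
  assumes "continuous_on UNIV w" "\<And>t. 0 \<le> w t" "solves_on h f {..<0} w" "w 0 > 0" "t \<le> 0"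
  shows "w t > 0"
proof (rule ccontr)
  assume "\<not> w t > 0"
  then have "w t = 0" using assms(2)[of t] by simp
  then have "t < 0" using assms(4,5) by (cases "t = 0") auto
  have "w s = 0" if "s \<le> t" for s
  proof (rule ccontr)
    assume "w s \<noteq> 0"
    then have "w s > 0" using assms(2)[of s] by simp
    have "w t > 0"
    proof (rule solution_pos_propagates[of s t w])
      show "continuous_on {s-h..t} w" using assms(1) by (rule continuous_on_subset) simp
      show "solves_on h f {s<..<t} w" using assms(3) by (rule solves_on_subset) (use \<open>t < 0\<close> in auto)
    qed (use that assms(2) \<open>w s > 0\<close> in auto)
    then show False using \<open>w t = 0\<close> by simp
  qed
  then have "w 0 = 0"
  proof (intro solution_stays_zero[of t 0 w])
    show "continuous_on {t-h..0} w" using assms(1) by (rule continuous_on_subset) simp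
    show "solves_on h f {t<..<0} w" using assms(3) by (rule solves_on_subset) auto
  qed (use \<open>t < 0\<close> assms(2) in auto)
  then show False using assms(4) by simp
qed

text \<open>
  The continuation restarts from the history at time \<open>-1\<close> rather than \<open>0\<close>, so that it overlaps
  \<open>w\<close> on \<open>(-1, 0)\<close> and the glued function is differentiable at \<open>0\<close>.
\<close>

lemma restart_from_past:
  assumes "continuous_on UNIV w" "\<And>t. t \<le> 0 \<Longrightarrow> 0 < w t" "solves_on h f {..<0} w"
  obtains y where "gsol h f y" "\<And>s. s \<in> {-h..1} \<Longrightarrow> y s = w (s - 1)"
proof -
  have sol: "sol_on h f 1 (\<lambda>s. w (s - 1))"
    unfolding sol_on_iff
  proof (intro conjI ballI)
    show "continuous_on {-h..1} (\<lambda>s. w (s - 1))"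
      by (rule continuous_on_compose2[OF assms(1)]) (auto intro!: continuous_intros)
    show "0 \<le> w (s - 1)" if "s \<in> {-h..1}" for s using that assms(2)[of "s - 1"] by simp
    show "solves_on h f {0<..<1} (\<lambda>s. w (s - 1))"
      using solves_on_shift[OF assms(3), of "{0<..<1}" "-1"] by simp
  qed
  then show ?thesis using that extension_exists[OF _ sol] by auto
qed

lemma continuation_to_future:
  assumes "continuous_on UNIV w" "\<And>t. t \<le> 0 \<Longrightarrow> 0 < w t" "solves_on h f {..<0} w"
  obtains \<psi> where "\<And>t. t \<le> 0 \<Longrightarrow> \<psi> t = w t" "solves_on h f UNIV \<psi>"
    "\<And>t. 0 \<le> t \<Longrightarrow> 0 < \<psi> t" "(\<psi> \<longlongrightarrow> K) at_top"
proof -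
  obtain y where y: "gsol h f y" "\<And>s. s \<in> {-h..1} \<Longrightarrow> y s = w (s - 1)"
    using restart_from_past[OF assms] by blast
  have y_cont: "continuous_on {-h..} y" and y_nonneg: "\<And>s. s \<ge> -h \<Longrightarrow> 0 \<le> y s"
    and y_sol: "solves_on h f {0<..} y"
    using y(1) by (auto simp: gsol_iff)
  define \<psi> where "\<psi> t = (if t \<le> 0 then w t else y (t + 1))" for t
  have \<psi>_y: "\<psi> t = y (t + 1)" if "t \<ge> -1 - h" for t using that y(2)[of "t + 1"] by (simp add: \<psi>_def)
  show ?thesis
  proof
    show \<psi>_w: "\<psi> t = w t" if "t \<le> 0" for t using that by (simp add: \<psi>_def)
    have "solves_on h f {..<0} \<psi>"
      by (rule solves_on_cong[OF assms(3), of "{..<0}"]) (use h_pos \<psi>_w in auto)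
    moreover have "solves_on h f {-1<..} \<psi>"
    proof (rule solves_on_cong[where U = "{-1 - h<..}"])
      show "solves_on h f {-1<..} (\<lambda>t. y (t + 1))" by (rule solves_on_shift[OF y_sol]) auto
    qed (use h_pos \<psi>_y in auto)
    ultimately have "solves_on h f ({..<0} \<union> {-1<..}) \<psi>" by (auto simp: solves_on_def)
    moreover have "{..<0} \<union> {-1<..} = (UNIV :: real set)" by auto
    ultimately show "solves_on h f UNIV \<psi>" by simp
    show "0 < \<psi> t" if "0 \<le> t" for t
    proof -
      have "0 < y (t + 1)"
      proof (rule solution_pos_propagates[of 1 "t + 1" y])
        show "continuous_on {1 - h..t + 1} y" using y_cont by (rule continuous_on_subset) auto
        show "solves_on h f {1<..<t + 1} y" using y_sol by (rule solves_on_subset) auto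
        show "0 < y 1" using y(2)[of 1] assms(2)[of 0] h_pos by simp
      qed (use that h_pos y_nonneg in auto)
      then show ?thesis using that h_pos by (simp add: \<psi>_y)
    qed
    have "y 0 \<noteq> 0" using y(2)[of 0] assms(2)[of "-1"] h_pos by simp
    then have "(y \<longlongrightarrow> K) at_top" using attracts y(1) h_pos by force
    then have "((\<lambda>t. y (t + 1)) \<longlongrightarrow> K) at_top" by (rule filterlim_compose) real_asymp
    moreover have "\<forall>\<^sub>F t in at_top. y (t + 1) = \<psi> t"
      using h_pos by (intro eventually_at_top_linorderI[of 0]) (simp add: \<psi>_y)
    ultimately show "(\<psi> \<longlongrightarrow> K) at_top" by (rule Lim_transform_eventually)
  qed
qed

end

theorem theorem5:
  fixes h K :: real and f :: "(real \<Rightarrow> real) \<Rightarrow> real"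
  assumes hpos: "h > 0"
    and fnonneg: "\<forall>\<phi>\<in>Cplus h. 0 \<le> f \<phi>"
    and fcont: "fcont h f"
    and fbdd: "maps_cb_to_bounded h f"
    and ext: "\<forall>T\<ge>0. \<forall>x. sol_on h f T x \<longrightarrow>
                (\<exists>y. gsol h f y \<and> (\<forall>s\<in>{-h..T}. y s = x s)) \<and>
                (\<forall>y z. gsol h f y \<and> (\<forall>s\<in>{-h..T}. y s = x s) \<and>
                       gsol h f z \<and> (\<forall>s\<in>{-h..T}. z s = x s) \<longrightarrow> (\<forall>s\<in>{-h..}. y s = z s))"
    and f0: "f (seg h (\<lambda>_. 0) 0) = 0"
    and Kpos: "K > 0"
    and fK: "f (seg h (\<lambda>_. K) 0) = K"
    and attr: "\<forall>x. gsol h f x \<and> (\<exists>s\<in>{-h..0}. x s \<noteq> 0) \<longrightarrow> (x \<longlongrightarrow> K) at_top"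
  shows "\<exists>\<psi> :: real \<Rightarrow> real. (\<forall>t. \<psi> t > 0)
           \<and> (\<forall>t. (\<psi> has_real_derivative (- \<psi> t + f (seg h \<psi> t))) (at t))
           \<and> (\<psi> \<longlongrightarrow> 0) at_bot \<and> (\<psi> \<longlongrightarrow> K) at_top"
proof -
  interpret attracting_equilibrium h f K
    using hpos fcont fbdd fnonneg ext f0 attr by unfold_locales
  obtain w L where w: "range w \<subseteq> {0..K/2}" "L-lipschitz_on UNIV w" "w 0 = K/2"
    "solves_on h f {..<0} w"
    using entire_solution_through_level[of "K/2"] Kpos by auto
  have cont: "continuous_on UNIV w" using w(2) by (rule lipschitz_on_continuous_on)
  have past: "0 < w t" if "t \<le> 0" for t
    using positive_on_past[OF cont _ w(4) _ that] w(1,3) Kpos by (auto simp: image_subset_iff)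
  obtain \<psi> where \<psi>: "\<And>t. t \<le> 0 \<Longrightarrow> \<psi> t = w t" "solves_on h f UNIV \<psi>"
    "\<And>t. 0 \<le> t \<Longrightarrow> 0 < \<psi> t" "(\<psi> \<longlongrightarrow> K) at_top"
    by (rule continuation_to_future[OF cont past w(4)]) blast+
  have "(w \<longlongrightarrow> 0) at_bot" using tendsto_zero_at_bot[OF w(1,2,4)] Kpos by simp
  then have "(\<psi> \<longlongrightarrow> 0) at_bot"
    by (rule Lim_transform_eventually) (auto intro: eventually_at_bot_linorderI[of 0] simp: \<psi>(1))
  moreover have "\<psi> t > 0" for t using past \<psi>(1,3) by (cases "t \<le> 0") auto
  ultimately show ?thesis using \<psi>(2,4) by (auto simp: solves_on_def)
qed

end
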